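(* Let $A$ be an abelian group of order $n$ and exponent greater than $2$, let $m$ be the number of elements of $A$ of order at most $2$, and let $\iota:A\to A$ be the automorphism $x\mapsto x^{-1}$. Then the number of inverse-closed subsets $S\subseteq A$ such that $\varphi(S)=S$ for some $\varphi\in\mathrm{Aut}(A)\setminus\{1,\iota\}$ is at most $2^{m/2+11n/24+(\log_2 n)^2}$.
   Context: A subset $S$ of a group is inverse-closed if $S^{-1}=S$. *)

theory Defs
  imports "HOL-Algebra.Algebra"
begin

definition group_exponent :: "('a, 'b) monoid_scheme \<Rightarrow> nat" where
  "group_exponent G = (LEAST k. 0 < k \<and> (\<forall>x\<in>carrier G. x [^]\<^bsub>G\<^esub> k = \<one>\<^bsub>G\<^esub>))"

definition inverse_closed :: "('a, 'b) monoid_scheme \<Rightarrow> 'a set \<Rightarrow> bool" where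
  "inverse_closed G S \<longleftrightarrow> (\<lambda>x. inv\<^bsub>G\<^esub> x) ` S = S"

end

theory Submission
  imports Defs
begin

text \<open>
  Fix an automorphism \<open>\<phi> \<notin> {1, \<iota>}\<close>. The inverse-closed \<open>\<phi>\<close>-invariant sets are unions of
  classes of the relation ``not separated by any such set'', so there are at most \<open>2\<^sup>k\<close> of
  them, \<open>k\<close> the number of classes. Each class contains \<open>{x, x\<inverse>, \<phi> x, (\<phi> x)\<inverse>}\<close>. Weight
  \<open>y\<close> by one plus the number of the sets \<open>I = {y = y\<inverse>}\<close>, \<open>C = {\<phi> y = y}\<close>,
  \<open>D = {\<phi> y = y\<inverse>}\<close> containing it: every class then has weight at least 4, while the
  total weight is \<open>n + |I| + |C| + |D|\<close>. Now \<open>C\<close> and \<open>D\<close> are proper subgroups, so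
  \<open>|C|, |D| \<le> n/2\<close>, and \<open>|C| |D| \<le> n |C \<inter> D| \<le> n m\<close>; with \<open>|I| \<le> m\<close> this gives
  \<open>k \<le> m/2 + 11n/24\<close>. Finally, an automorphism is determined by its values on a generating set
  of at most \<open>log\<^sub>2 n\<close> elements, so there are at most \<open>n\<^bsup>log\<^sub>2 n\<^esup> = 2\<^bsup>(log\<^sub>2 n)\<^sup>2\<^esup>\<close> of them.
\<close>

section \<open>Families of sets and their indistinguishability classes\<close>

definition indist :: "'a set \<Rightarrow> 'a set set \<Rightarrow> ('a \<times> 'a) set" where
  "indist U F = {(x, y) \<in> U \<times> U. \<forall>S\<in>F. x \<in> S \<longleftrightarrow> y \<in> S}"

lemma equiv_indist: "equiv U (indist U F)"
  unfolding indist_def by (rule equivI) (auto simp: refl_on_def sym_def trans_def)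

lemma card_family_le_indist_classes:
  assumes "finite U" and "F \<subseteq> Pow U"
  shows "card F \<le> 2 ^ card (U // indist U F)"
proof -
  let ?r = "indist U F"
  let ?classes_in = "\<lambda>S. {c \<in> U // ?r. c \<subseteq> S}"
  have union_of_classes: "S = \<Union>(?classes_in S)" if "S \<in> F" for S
  proof
    show "S \<subseteq> \<Union>(?classes_in S)"
    proof
      fix x assume "x \<in> S"
      with that assms(2) have "x \<in> U" by blast
      have "?r `` {x} \<subseteq> S"
        using \<open>x \<in> S\<close> that by (auto simp: indist_def)
      then have "?r `` {x} \<in> ?classes_in S"
        using \<open>x \<in> U\<close> by (simp add: quotientI)
      moreover have "x \<in> ?r `` {x}"
        using \<open>x \<in> U\<close> by (rule equiv_class_self[OF equiv_indist])
      ultimately show "x \<in> \<Union>(?classes_in S)"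
        by (rule UnionI)
    qed
  qed auto
  have "inj_on ?classes_in F"
  proof (rule inj_onI)
    fix S T assume "S \<in> F" "T \<in> F" "?classes_in S = ?classes_in T"
    then show "S = T"
      using union_of_classes[of S] union_of_classes[of T] by simp
  qed
  moreover have "?classes_in ` F \<subseteq> Pow (U // ?r)"
    by blast
  moreover have "finite (U // ?r)"
    using assms(1) equiv_type[OF equiv_indist] by (rule finite_quotient)
  ultimately have "card F \<le> card (Pow (U // ?r))"
    by (intro card_inj_on_le) auto
  then show ?thesis
    using \<open>finite (U // ?r)\<close> by (simp add: card_Pow)
qed

lemma sum_over_quotient:
  assumes "equiv U r" and "finite U"
  shows "sum f U = (\<Sum>c\<in>U // r. sum f c)"
proof -
  have "\<forall>c\<in>U // r. finite c"
    using assms equiv_type[OF assms(1)] finite_equiv_class by blast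
  moreover have "\<forall>c\<in>U // r. \<forall>d\<in>U // r. c \<noteq> d \<longrightarrow> c \<inter> d = {}"
    using quotient_disj[OF assms(1)] by blast
  ultimately have "sum f (\<Union>(U // r)) = (\<Sum>c\<in>U // r. sum f c)"
    using sum.Union_disjoint by simp
  then show ?thesis
    using Union_quotient[OF assms(1)] by simp
qed

section \<open>Subgroups and generating sets\<close>

lemma (in group) double_card_subgroup_le:
  assumes "subgroup H G" and "subgroup K G" and "H \<subset> K" and "finite K"
  shows "2 * card H \<le> card K"
proof -
  obtain g where g: "g \<in> K" "g \<notin> H"
    using assms(3) by blast
  have H: "H \<subseteq> carrier G" and g_carrier: "g \<in> carrier G"
    using g assms(1,2) subgroup.subset by blast+
  have coset_in_K: "H #> g \<subseteq> K"
    using assms(2,3) g unfolding r_coset_def by (auto intro: subgroup.m_closed)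
  have disjoint: "H \<inter> (H #> g) = {}"
  proof (rule ccontr)
    assume "H \<inter> (H #> g) \<noteq> {}"
    then obtain h where h: "h \<in> H" "h \<otimes> g \<in> H"
      unfolding r_coset_def by blast
    then have "inv h \<otimes> (h \<otimes> g) \<in> H"
      using assms(1) by (simp add: subgroup.m_closed subgroup.m_inv_closed)
    moreover have "inv h \<otimes> (h \<otimes> g) = g"
      using h(1) H g_carrier by (simp add: m_assoc[symmetric] subsetD)
    ultimately show False
      using g(2) by simp
  qed
  have "finite H" and "finite (H #> g)"
    using assms(3,4) coset_in_K finite_subset by blast+
  have "2 * card H = card H + card (H #> g)"
    using card_rcosets_equal[OF rcosetsI[OF H g_carrier] H] by simp
  also have "\<dots> = card (H \<union> (H #> g))"
    using \<open>finite H\<close> \<open>finite (H #> g)\<close> disjoint by (rule card_Un_disjoint[symmetric])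
  also have "\<dots> \<le> card K"
    using assms(3,4) coset_in_K by (intro card_mono) auto
  finally show ?thesis .
qed

lemma (in group) card_proper_subgroup_le_half:
  assumes "subgroup H G" and "H \<noteq> carrier G" and "finite (carrier G)"
  shows "2 * card H \<le> order G"
  using double_card_subgroup_le[OF assms(1) subgroup_self] assms subgroup.subset
  unfolding order_def by blast

lemma (in group) card_mult_subgroups_le:
  assumes H: "subgroup H G" and K: "subgroup K G" and fin: "finite (carrier G)"
  shows "card H * card K \<le> order G * card (H \<inter> K)"
proof -
  have HG: "H \<subseteq> carrier G" and KG: "K \<subseteq> carrier G"
    using H K subgroup.subset by blast+
  let ?fibre = "\<lambda>z. {p \<in> H \<times> K. fst p \<otimes> snd p = z}"
  have card_fibre: "card (?fibre z) \<le> card (H \<inter> K)" for z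
  proof (cases "?fibre z = {}")
    case False
    then obtain x0 y0 where p0: "x0 \<in> H" "y0 \<in> K" "x0 \<otimes> y0 = z"
      by auto
    have "inj_on (\<lambda>p. inv x0 \<otimes> fst p) (?fibre z)"
    proof (rule inj_onI)
      fix p p' assume p: "p \<in> ?fibre z" and p': "p' \<in> ?fibre z"
        and "inv x0 \<otimes> fst p = inv x0 \<otimes> fst p'"
      then have "fst p = fst p'"
        using p0(1) HG by (auto simp: mem_Times_iff subsetD)
      moreover from this have "snd p = snd p'"
        using p p' HG KG by (auto simp: mem_Times_iff subsetD)
      ultimately show "p = p'"
        by (simp add: prod_eq_iff)
    qed
    moreover have "inv x0 \<otimes> fst p \<in> H \<inter> K" if p: "p \<in> ?fibre z" for p
    proof -
      obtain x y where xy: "p = (x, y)" "x \<in> H" "y \<in> K" "x \<otimes> y = z"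
        using p by (cases p) auto
      have carriers: "x \<in> carrier G" "y \<in> carrier G" "x0 \<in> carrier G" "y0 \<in> carrier G"
        using xy p0 HG KG by auto
      have "inv x0 \<otimes> x = y0 \<otimes> inv y"
        using carriers p0(3) xy(4)
        by (metis inv_solve_left inv_solve_right m_assoc m_closed inv_closed)
      moreover have "inv x0 \<otimes> x \<in> H" and "y0 \<otimes> inv y \<in> K"
        using xy p0 H K by (auto intro: subgroup.m_closed subgroup.m_inv_closed)
      ultimately show ?thesis
        using xy(1) by simp
    qed
    then have "(\<lambda>p. inv x0 \<otimes> fst p) ` ?fibre z \<subseteq> H \<inter> K"
      by blast
    moreover have "finite (H \<inter> K)"
      using HG fin finite_subset by blast
    ultimately show ?thesis
      by (meson card_inj_on_le)
  qed (metis card.empty zero_le)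
  have "H \<times> K = (\<Union>z\<in>carrier G. ?fibre z)"
    using HG KG by (auto simp: subset_iff)
  then have "card H * card K = card (\<Union>z\<in>carrier G. ?fibre z)"
    by (simp add: card_cartesian_product)
  also have "\<dots> \<le> (\<Sum>z\<in>carrier G. card (?fibre z))"
    using fin by (rule card_UN_le)
  also have "\<dots> \<le> order G * card (H \<inter> K)"
    using sum_bounded_above[of "carrier G" "\<lambda>z. card (?fibre z)"] card_fibre
    unfolding order_def by simp
  finally show ?thesis .
qed

lemma (in group) exists_small_generating_set:
  assumes fin: "finite (carrier G)"
  shows "\<exists>gs\<subseteq>carrier G. generate G gs = carrier G \<and> 2 ^ card gs \<le> order G"
proof -
  have "\<exists>gs'\<subseteq>carrier G. generate G gs' = carrier G \<and> 2 ^ card gs' \<le> order G"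
    if "gs \<subseteq> carrier G" and "2 ^ card gs \<le> card (generate G gs)" for gs
    using that
  proof (induction "order G - card (generate G gs)" arbitrary: gs rule: less_induct)
    case less
    have gen_carrier: "generate G gs \<subseteq> carrier G"
      using generate_incl[OF less.prems(1)] .
    show ?case
    proof (cases "generate G gs = carrier G")
      case True
      then show ?thesis
        using less.prems unfolding order_def by auto
    next
      case False
      then obtain g where g: "g \<in> carrier G" "g \<notin> generate G gs"
        using gen_carrier by blast
      define gs' where "gs' = insert g gs"
      have gs'_carrier: "gs' \<subseteq> carrier G"
        using g less.prems(1) by (simp add: gs'_def)
      have psub: "generate G gs \<subset> generate G gs'"
        using g mono_generate[of gs gs'] generate.incl[of g gs' G] by (auto simp: gs'_def)
      have fin': "finite (generate G gs')"
        using generate_incl[OF gs'_carrier] fin finite_subset by blast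
      have "g \<notin> gs"
        using g generate.incl[of g gs G] by blast
      moreover have "finite gs"
        using less.prems(1) fin by (rule finite_subset)
      ultimately have "card gs' = Suc (card gs)"
        by (simp add: gs'_def)
      moreover have "2 * card (generate G gs) \<le> card (generate G gs')"
        using double_card_subgroup_le[OF generate_is_subgroup[OF less.prems(1)]
            generate_is_subgroup[OF gs'_carrier] psub fin'] .
      ultimately have "2 ^ card gs' \<le> card (generate G gs')"
        using less.prems(2) by simp
      moreover have "card (generate G gs) < card (generate G gs')"
        using fin' psub by (rule psubset_card_mono)
      moreover have "card (generate G gs') \<le> order G"
        using fin generate_incl[OF gs'_carrier] unfolding order_def by (rule card_mono)
      ultimately show ?thesis
        by (intro less.hyps[OF _ gs'_carrier]) auto
    qed
  qed
  moreover have "finite (generate G {})"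
    using generate_incl[of "{}"] fin finite_subset by blast
  then have "2 ^ card {} \<le> card (generate G {})"
    using generate.one[of G "{}"] by (auto simp: Suc_le_eq card_gt_0_iff)
  ultimately show ?thesis
    by blast
qed

lemma (in group) hom_eq_on_generate:
  assumes "group H" and "p \<in> hom G H" and "q \<in> hom G H"
    and "gs \<subseteq> carrier G" and "\<forall>g\<in>gs. p g = q g" and "x \<in> generate G gs"
  shows "p x = q x"
proof -
  interpret p: group_hom G H p
    using assms(1,2) by (simp add: group_hom_def group_hom_axioms_def is_group)
  interpret q: group_hom G H q
    using assms(1,3) by (simp add: group_hom_def group_hom_axioms_def is_group)
  from assms(6) show ?thesis
  proof (induction rule: generate.induct)
    case (inv h)
    then show ?case
      using assms(4,5) by auto
  next
    case (eng h h')
    then have "h \<in> carrier G" "h' \<in> carrier G"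
      using generate_incl[OF assms(4)] by auto
    then show ?case
      using eng.IH by simp
  qed (use assms(5) in auto)
qed

lemma (in group) card_extensional_homs_le:
  assumes "group H" and "finite (carrier H)"
    and "gs \<subseteq> carrier G" and "finite gs" and "generate G gs = carrier G"
  shows "card (hom G H \<inter> extensional (carrier G)) \<le> card (carrier H) ^ card gs"
proof -
  have "inj_on (\<lambda>p. restrict p gs) (hom G H \<inter> extensional (carrier G))"
  proof (rule inj_onI)
    fix p q
    assume p: "p \<in> hom G H \<inter> extensional (carrier G)"
      and q: "q \<in> hom G H \<inter> extensional (carrier G)"
      and "restrict p gs = restrict q gs"
    then have "\<forall>g\<in>gs. p g = q g"
      by (metis restrict_apply')
    then have "p x = q x" if "x \<in> carrier G" for x
      using hom_eq_on_generate[OF assms(1) _ _ assms(3)] p q assms(5) that by blast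
    then show "p = q"
      using p q by (intro extensionalityI[of p "carrier G" q]) auto
  qed
  moreover have "(\<lambda>p. restrict p gs) ` (hom G H \<inter> extensional (carrier G)) \<subseteq> gs \<rightarrow>\<^sub>E carrier H"
    using assms(3) by (auto simp: hom_def)
  ultimately have "card (hom G H \<inter> extensional (carrier G)) \<le> card (gs \<rightarrow>\<^sub>E carrier H)"
    using assms(2,4) by (intro card_inj_on_le) (auto simp: finite_PiE)
  then show ?thesis
    using assms(4) by (simp add: card_PiE)
qed

lemma pow_le_two_powr_log_squared:
  fixes n k :: nat
  assumes "2 ^ k \<le> n"
  shows "real n ^ k \<le> 2 powr ((log 2 (real n))\<^sup>2)"
proof -
  have n: "1 \<le> real n"
    using assms by (metis of_nat_le_iff of_nat_1 one_le_numeral one_le_power order_trans)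
  have "real k \<le> log 2 (real n)"
    using assms n by (simp add: le_log_iff powr_realpow flip: of_nat_le_iff)
  have "real n ^ k = (2 powr log 2 (real n)) powr real k"
    using n by (simp add: powr_realpow)
  also have "\<dots> = 2 powr (log 2 (real n) * real k)"
    by (simp add: powr_powr)
  also have "\<dots> \<le> 2 powr (log 2 (real n) * log 2 (real n))"
    using \<open>real k \<le> log 2 (real n)\<close> n by (intro powr_mono mult_left_mono) auto
  finally show ?thesis
    by (simp only: power2_eq_square)
qed

section \<open>Sets invariant under inversion and an automorphism\<close>

lemma weight_count_arith:
  fixes r n m i c d e :: real
  assumes "4 * r \<le> n + i + c + d" and "i \<le> m" and "e \<le> m"
    and "2 * c \<le> n" and "2 * d \<le> n" and "c * d \<le> n * e"
    and "0 \<le> c" and "0 \<le> d" and "0 \<le> n" and "0 \<le> m"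
  shows "r \<le> m / 2 + 11 * n / 24"
proof -
  have "min c d * min c d \<le> c * d"
    using assms(7,8) mult_mono[of "min c d" c "min c d" d] by simp
  also have "\<dots> \<le> n * m"
    using assms(3,6,9) mult_left_mono[of e m n] by linarith
  finally have "(3 * min c d)\<^sup>2 \<le> 9 * (n * m)"
    by (simp add: power2_eq_square)
  also have "\<dots> \<le> (3 * m + n)\<^sup>2"
  proof -
    have "(3 * m + n)\<^sup>2 = (3 * m - n)\<^sup>2 + 12 * (n * m)"
      by (simp add: power2_eq_square algebra_simps)
    then show ?thesis
      using zero_le_power2[of "3 * m - n"] mult_nonneg_nonneg[OF assms(9,10)] by linarith
  qed
  finally have "(3 * min c d)\<^sup>2 \<le> (3 * m + n)\<^sup>2" .
  then have "3 * min c d \<le> 3 * m + n"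
    by (rule power2_le_imp_le) (use assms(9,10) in linarith)
  moreover have "2 * max c d \<le> n"
    using assms(4,5) by simp
  moreover have "c + d = min c d + max c d"
    by (simp add: min_def max_def)
  ultimately show ?thesis
    using assms(1,2) by linarith
qed

definition (in group) self_inverse_elements :: "'a set" where
  "self_inverse_elements = {x \<in> carrier G. inv x = x}"

lemma (in group) self_inverse_elements_ord_le_2:
  "self_inverse_elements \<subseteq> {x \<in> carrier G. ord x \<le> 2}"
proof
  fix x assume "x \<in> self_inverse_elements"
  then have x: "x \<in> carrier G" "inv x = x"
    by (auto simp: self_inverse_elements_def)
  then have "x [^] (2::nat) = \<one>"
    by (metis numeral_2_eq_2 nat_pow_Suc nat_pow_0 l_one r_inv)
  then have "ord x \<le> 2"
    using pow_eq_id[OF x(1)] by (simp add: dvd_imp_le)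
  then show "x \<in> {x \<in> carrier G. ord x \<le> 2}"
    using x(1) by simp
qed

definition inverse_closed_invariant_sets :: "('a, 'b) monoid_scheme \<Rightarrow> ('a \<Rightarrow> 'a) \<Rightarrow> 'a set set" where
  "inverse_closed_invariant_sets G \<phi> = {S. S \<subseteq> carrier G \<and> inverse_closed G S \<and> \<phi> ` S = S}"

locale group_automorphism = group G for G (structure) +
  fixes \<phi> :: "'a \<Rightarrow> 'a"
  assumes automorphism: "\<phi> \<in> iso G G"
begin

sublocale group_hom G G \<phi>
  using automorphism by unfold_locales (simp add: Group.iso_iff)

lemma \<phi>_eq_iff [simp]: "x \<in> carrier G \<Longrightarrow> y \<in> carrier G \<Longrightarrow> \<phi> x = \<phi> y \<longleftrightarrow> x = y"
  using automorphism by (auto simp: Group.iso_iff inj_on_def)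

definition fixed_elements :: "'a set" where
  "fixed_elements = {x \<in> carrier G. \<phi> x = x}"

definition inverted_elements :: "'a set" where
  "inverted_elements = {x \<in> carrier G. \<phi> x = inv x}"

abbreviation invariant_sets :: "'a set set" where
  "invariant_sets \<equiv> inverse_closed_invariant_sets G \<phi>"

lemma subgroup_fixed_elements: "subgroup fixed_elements G"
  by (rule subgroupI) (auto simp: fixed_elements_def)

lemma subgroup_inverted_elements:
  assumes "comm_group G"
  shows "subgroup inverted_elements G"
proof -
  interpret comm_group G by fact
  show ?thesis
    by (rule subgroupI) (auto simp: inverted_elements_def inv_mult)
qed

lemma fixed_inter_inverted_subset: "fixed_elements \<inter> inverted_elements \<subseteq> self_inverse_elements"
  by (auto simp: fixed_elements_def inverted_elements_def self_inverse_elements_def)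

lemma invariant_set_iff:
  assumes "S \<in> invariant_sets" and "x \<in> carrier G"
  shows "inv x \<in> S \<longleftrightarrow> x \<in> S" and "\<phi> x \<in> S \<longleftrightarrow> x \<in> S"
proof -
  have S: "S \<subseteq> carrier G" "(\<lambda>x. inv x) ` S = S" "\<phi> ` S = S"
    using assms(1) by (auto simp: inverse_closed_invariant_sets_def inverse_closed_def)
  show "inv x \<in> S \<longleftrightarrow> x \<in> S"
    using S(1,2) assms(2) by (metis image_eqI inv_inv subsetD)
  show "\<phi> x \<in> S \<longleftrightarrow> x \<in> S"
    using S(1,3) assms(2) by (metis \<phi>_eq_iff image_iff subsetD)
qed

abbreviation separation_classes :: "'a set set" where
  "separation_classes \<equiv> carrier G // indist (carrier G) invariant_sets"

lemma quartet_subset_separation_class: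
  assumes "x \<in> carrier G"
  shows "{x, inv x, \<phi> x, inv (\<phi> x)} \<subseteq> indist (carrier G) invariant_sets `` {x}"
  using assms invariant_set_iff by (auto simp: indist_def)

lemma \<phi>_mem_self_inverse_iff:
  assumes "x \<in> carrier G"
  shows "\<phi> x \<in> self_inverse_elements \<longleftrightarrow> x \<in> self_inverse_elements"
proof -
  have "inv (\<phi> x) = \<phi> x \<longleftrightarrow> \<phi> (inv x) = \<phi> x"
    using assms by simp
  also have "\<dots> \<longleftrightarrow> inv x = x"
    using assms by (intro \<phi>_eq_iff) auto
  finally show ?thesis
    using assms by (simp add: self_inverse_elements_def)
qed

lemma inv_mem_fixed_elements: "x \<in> fixed_elements \<Longrightarrow> inv x \<in> fixed_elements"
  by (simp add: fixed_elements_def)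

lemma inv_mem_inverted_elements: "x \<in> inverted_elements \<Longrightarrow> inv x \<in> inverted_elements"
  by (simp add: inverted_elements_def)

definition weight :: "'a \<Rightarrow> nat" where
  "weight y = 1 + of_bool (y \<in> self_inverse_elements) + of_bool (y \<in> fixed_elements)
                 + of_bool (y \<in> inverted_elements)"

lemma two_le_weight_iff:
  "2 \<le> weight y \<longleftrightarrow> y \<in> self_inverse_elements \<or> y \<in> fixed_elements \<or> y \<in> inverted_elements"
  by (simp add: weight_def)

lemma weight_quartet_ge_4:
  assumes x: "x \<in> carrier G"
  shows "4 \<le> sum weight {x, inv x, \<phi> x, inv (\<phi> x)}"
proof -
  let ?Q = "{x, inv x, \<phi> x, inv (\<phi> x)}"
  have two_heavy: "4 \<le> sum weight ?Q"
    if "a \<in> ?Q" "b \<in> ?Q" "a \<noteq> b" "2 \<le> weight a" "2 \<le> weight b" for a b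
  proof -
    have "weight a + weight b = sum weight {a, b}"
      using that(3) by simp
    also have "\<dots> \<le> sum weight ?Q"
      using that(1,2) by (intro sum_mono2) auto
    finally show ?thesis
      using that(4,5) by simp
  qed
  consider "x \<in> self_inverse_elements" "x \<in> fixed_elements"
    | "x \<in> self_inverse_elements" "x \<notin> fixed_elements"
    | "x \<notin> self_inverse_elements" "x \<in> fixed_elements \<or> x \<in> inverted_elements"
    | "x \<notin> self_inverse_elements" "x \<notin> fixed_elements" "x \<notin> inverted_elements"
    by blast
  then show ?thesis
  proof cases
    case 1
    then have "weight x = 4"
      by (simp add: weight_def self_inverse_elements_def fixed_elements_def inverted_elements_def)
    then show ?thesis
      using member_le_sum[of x ?Q weight] by simp
  next
    case 2
    then have "\<phi> x \<in> self_inverse_elements" and "\<phi> x \<noteq> x"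
      using x \<phi>_mem_self_inverse_iff by (auto simp: fixed_elements_def)
    then show ?thesis
      using 2 two_heavy[of x "\<phi> x"] by (simp add: two_le_weight_iff)
  next
    case 3
    then have "inv x \<in> fixed_elements \<or> inv x \<in> inverted_elements" and "inv x \<noteq> x"
      using x inv_mem_fixed_elements inv_mem_inverted_elements
      by (auto simp: self_inverse_elements_def)
    then show ?thesis
      using 3 two_heavy[of x "inv x"] by (auto simp: two_le_weight_iff)
  next
    case 4
    have "inv x \<noteq> x" "\<phi> x \<noteq> x" "\<phi> x \<noteq> inv x" "inv (\<phi> x) \<noteq> \<phi> x"
      using 4 x \<phi>_mem_self_inverse_iff[OF x]
      by (auto simp: self_inverse_elements_def fixed_elements_def inverted_elements_def)
    moreover have "inv (\<phi> x) \<noteq> x"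
    proof
      assume "inv (\<phi> x) = x"
      then have "\<phi> x = inv x"
        using x inv_inv[of "\<phi> x"] by simp
      then show False
        using 4(3) x by (simp add: inverted_elements_def)
    qed
    moreover have "inv (\<phi> x) \<noteq> inv x"
      using 4(2) x by (auto simp: fixed_elements_def)
    ultimately have "card ?Q = 4"
      by auto
    moreover have "card ?Q \<le> sum weight ?Q"
      using sum_mono[of ?Q "\<lambda>_. 1" weight] by (simp add: weight_def)
    ultimately show ?thesis
      by simp
  qed
qed

lemma sum_weight:
  assumes "finite (carrier G)"
  shows "sum weight (carrier G) = order G + card self_inverse_elements
           + card fixed_elements + card inverted_elements"
proof -
  have count: "(\<Sum>y\<in>carrier G. of_bool (y \<in> A)) = card A" if "A \<subseteq> carrier G" for A
    using assms that by (simp add: Int_absorb1)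
  have "self_inverse_elements \<subseteq> carrier G" "fixed_elements \<subseteq> carrier G"
    "inverted_elements \<subseteq> carrier G"
    by (auto simp: self_inverse_elements_def fixed_elements_def inverted_elements_def)
  then show ?thesis
    unfolding weight_def sum.distrib
    by (simp only: count order_def card_eq_sum)
qed

lemma four_card_separation_classes_le:
  assumes "finite (carrier G)"
  shows "4 * card separation_classes \<le> order G + card self_inverse_elements
           + card fixed_elements + card inverted_elements"
proof -
  have "4 * card separation_classes = (\<Sum>c\<in>separation_classes. 4)"
    by simp
  also have "\<dots> \<le> (\<Sum>c\<in>separation_classes. sum weight c)"
  proof (rule sum_mono)
    fix c assume "c \<in> separation_classes"
    then obtain x where x: "x \<in> carrier G" and c: "c = indist (carrier G) invariant_sets `` {x}"
      by (rule quotientE)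
    have "c \<subseteq> carrier G"
      using c by (auto simp: indist_def)
    then have "sum weight {x, inv x, \<phi> x, inv (\<phi> x)} \<le> sum weight c"
      using assms quartet_subset_separation_class[OF x] c
      by (intro sum_mono2) (auto intro: finite_subset)
    then show "4 \<le> sum weight c"
      using weight_quartet_ge_4[OF x] by linarith
  qed
  also have "\<dots> = sum weight (carrier G)"
    using sum_over_quotient[OF equiv_indist assms, symmetric] .
  finally show ?thesis
    using sum_weight[OF assms] by simp
qed

lemma card_invariant_sets_le:
  assumes "comm_group G" and "finite (carrier G)"
    and "\<exists>x\<in>carrier G. \<phi> x \<noteq> x" and "\<exists>x\<in>carrier G. \<phi> x \<noteq> inv x"
  shows "real (card invariant_sets)
           \<le> 2 powr (real (card {x \<in> carrier G. ord x \<le> 2}) / 2 + 11 * real (order G) / 24)"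
proof -
  let ?M = "{x \<in> carrier G. ord x \<le> 2}"
  let ?C = fixed_elements and ?D = inverted_elements
  have "finite ?M"
    using assms(2) by simp
  have i: "card self_inverse_elements \<le> card ?M"
    using self_inverse_elements_ord_le_2 \<open>finite ?M\<close> by (rule card_mono[rotated])
  have e: "card (?C \<inter> ?D) \<le> card ?M"
    using fixed_inter_inverted_subset self_inverse_elements_ord_le_2 \<open>finite ?M\<close>
    by (meson card_mono order_trans)
  have c: "2 * card ?C \<le> order G"
    using card_proper_subgroup_le_half[OF subgroup_fixed_elements] assms(2,3)
    by (auto simp: fixed_elements_def)
  have d: "2 * card ?D \<le> order G"
    using card_proper_subgroup_le_half[OF subgroup_inverted_elements[OF assms(1)]] assms(2,4)
    by (auto simp: inverted_elements_def)
  have cd: "card ?C * card ?D \<le> order G * card (?C \<inter> ?D)"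
    using card_mult_subgroups_le[OF subgroup_fixed_elements
        subgroup_inverted_elements[OF assms(1)] assms(2)] .
  have r: "4 * card separation_classes \<le> order G + card self_inverse_elements + card ?C + card ?D"
    using four_card_separation_classes_le[OF assms(2)] .
  have "real (card separation_classes) \<le> real (card ?M) / 2 + 11 * real (order G) / 24"
    by (rule weight_count_arith[OF of_nat_mono[OF r, simplified] of_nat_mono[OF i]
          of_nat_mono[OF e] of_nat_mono[OF c, simplified] of_nat_mono[OF d, simplified]
          of_nat_mono[OF cd, simplified]]) simp_all
  moreover have "card invariant_sets \<le> 2 ^ card separation_classes"
    using assms(2) by (intro card_family_le_indist_classes) (auto simp: inverse_closed_invariant_sets_def)
  then have "real (card invariant_sets) \<le> 2 powr real (card separation_classes)"
    by (simp add: powr_realpow flip: of_nat_le_iff)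
  ultimately show ?thesis
    by (meson order_trans powr_mono one_le_numeral)
qed

end

section \<open>Counting automorphisms and symmetric sets\<close>

text \<open>\<open>Aut(G) \<setminus> {1, \<iota>}\<close>, each automorphism represented by its restriction to the carrier.\<close>
definition nontrivial_automorphisms :: "('a, 'b) monoid_scheme \<Rightarrow> ('a \<Rightarrow> 'a) set" where
  "nontrivial_automorphisms G = {\<phi> \<in> iso G G \<inter> extensional (carrier G).
     (\<exists>x\<in>carrier G. \<phi> x \<noteq> x) \<and> (\<exists>x\<in>carrier G. \<phi> x \<noteq> inv\<^bsub>G\<^esub> x)}"

definition nontrivially_symmetric_sets :: "('a, 'b) monoid_scheme \<Rightarrow> 'a set set" where
  "nontrivially_symmetric_sets G = {S. S \<subseteq> carrier G \<and> inverse_closed G S \<and>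
     (\<exists>\<phi> \<in> iso G G. (\<exists>x\<in>carrier G. \<phi> x \<noteq> x) \<and>
                   (\<exists>x\<in>carrier G. \<phi> x \<noteq> inv\<^bsub>G\<^esub> x) \<and> \<phi> ` S = S)}"

lemma finite_extensional_homs:
  assumes "finite (carrier G)" and "finite (carrier H)"
  shows "finite (hom G H \<inter> extensional (carrier G))"
proof (rule finite_subset)
  show "hom G H \<inter> extensional (carrier G) \<subseteq> carrier G \<rightarrow>\<^sub>E carrier H"
    by (auto simp: hom_def PiE_def)
  show "finite (carrier G \<rightarrow>\<^sub>E carrier H)"
    using assms by (simp add: finite_PiE)
qed

lemma (in group) card_extensional_endomorphisms_le:
  assumes "finite (carrier G)"
  shows "real (card (hom G G \<inter> extensional (carrier G))) \<le> 2 powr ((log 2 (real (order G)))\<^sup>2)"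
proof -
  obtain gs where gs: "gs \<subseteq> carrier G" "generate G gs = carrier G" "2 ^ card gs \<le> order G"
    using exists_small_generating_set[OF assms] by blast
  have "finite gs"
    using gs(1) assms by (rule finite_subset)
  have "card (hom G G \<inter> extensional (carrier G)) \<le> order G ^ card gs"
    using card_extensional_homs_le[OF is_group assms gs(1) \<open>finite gs\<close> gs(2)]
    unfolding order_def .
  then have "real (card (hom G G \<inter> extensional (carrier G))) \<le> real (order G) ^ card gs"
    by (metis of_nat_le_iff of_nat_power)
  also have "\<dots> \<le> 2 powr ((log 2 (real (order G)))\<^sup>2)"
    using gs(3) by (rule pow_le_two_powr_log_squared)
  finally show ?thesis .
qed

lemma (in group) nontrivially_symmetric_sets_subset:
  "nontrivially_symmetric_sets G
     \<subseteq> (\<Union>\<phi>\<in>nontrivial_automorphisms G. inverse_closed_invariant_sets G \<phi>)"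
proof (clarsimp simp: nontrivially_symmetric_sets_def)
  fix S \<phi> x y
  assume S: "S \<subseteq> carrier G" "inverse_closed G S" "\<phi> \<in> iso G G" "\<phi> ` S = S"
    and x: "x \<in> carrier G" "\<phi> x \<noteq> x" and y: "y \<in> carrier G" "\<phi> y \<noteq> inv y"
  let ?\<psi> = "restrict \<phi> (carrier G)"
  have "?\<psi> \<in> nontrivial_automorphisms G"
    using S(3) x y by (auto simp: nontrivial_automorphisms_def intro: iso_eq)
  moreover have "?\<psi> ` S = S"
    using S(1,4) by (auto simp: image_def subset_iff)
  then have "S \<in> inverse_closed_invariant_sets G ?\<psi>"
    using S(1,2) by (simp add: inverse_closed_invariant_sets_def)
  ultimately show "\<exists>\<psi>\<in>nontrivial_automorphisms G. S \<in> inverse_closed_invariant_sets G \<psi>"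
    by blast
qed

lemma (in comm_group) card_nontrivially_symmetric_sets_le:
  assumes "finite (carrier G)"
  shows "real (card (nontrivially_symmetric_sets G))
           \<le> card (nontrivial_automorphisms G)
             * 2 powr (real (card {x \<in> carrier G. ord x \<le> 2}) / 2 + 11 * real (order G) / 24)"
    (is "_ \<le> _ * 2 powr ?bound")
proof -
  let ?Aut = "nontrivial_automorphisms G"
  have "finite ?Aut"
    using finite_extensional_homs[OF assms assms] by (rule rev_finite_subset)
      (auto simp: nontrivial_automorphisms_def iso_def)
  have "finite (\<Union>\<phi>\<in>?Aut. inverse_closed_invariant_sets G \<phi>)"
    using assms by (rule rev_finite_subset[OF finite_Pow_iff[THEN iffD2]])
      (auto simp: inverse_closed_invariant_sets_def)
  then have "card (nontrivially_symmetric_sets G)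
      \<le> card (\<Union>\<phi>\<in>?Aut. inverse_closed_invariant_sets G \<phi>)"
    using nontrivially_symmetric_sets_subset by (rule card_mono)
  also have "\<dots> \<le> (\<Sum>\<phi>\<in>?Aut. card (inverse_closed_invariant_sets G \<phi>))"
    using \<open>finite ?Aut\<close> by (rule card_UN_le)
  finally have "card (nontrivially_symmetric_sets G)
      \<le> (\<Sum>\<phi>\<in>?Aut. card (inverse_closed_invariant_sets G \<phi>))" .
  then have "real (card (nontrivially_symmetric_sets G))
      \<le> (\<Sum>\<phi>\<in>?Aut. real (card (inverse_closed_invariant_sets G \<phi>)))"
    by (metis of_nat_le_iff of_nat_sum)
  also have "\<dots> \<le> (\<Sum>\<phi>\<in>?Aut. 2 powr ?bound)"
  proof (rule sum_mono)
    fix \<phi> assume "\<phi> \<in> ?Aut"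
    then interpret group_automorphism G \<phi>
      by unfold_locales (simp add: nontrivial_automorphisms_def)
    show "real (card (inverse_closed_invariant_sets G \<phi>)) \<le> 2 powr ?bound"
      using card_invariant_sets_le comm_group_axioms assms \<open>\<phi> \<in> ?Aut\<close>
      by (simp add: nontrivial_automorphisms_def)
  qed
  finally show ?thesis
    by simp
qed

theorem lemma5p5:
  fixes A :: "('a, 'b) monoid_scheme" and n m :: nat
  assumes "comm_group A"
    and "finite (carrier A)"
    and "n = card (carrier A)"
    and "group_exponent A > 2"
    and "m = card {x \<in> carrier A. group.ord A x \<le> 2}"
  shows "real (card {S. S \<subseteq> carrier A \<and> inverse_closed A S \<and>
            (\<exists>\<phi> \<in> iso A A. (\<exists>x\<in>carrier A. \<phi> x \<noteq> x) \<and>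
                          (\<exists>x\<in>carrier A. \<phi> x \<noteq> inv\<^bsub>A\<^esub> x) \<and> \<phi> ` S = S)})
         \<le> 2 powr (real m / 2 + 11 * real n / 24 + (log 2 (real n))\<^sup>2)"
proof -
  interpret comm_group A
    by (rule assms(1))
  have "card (nontrivial_automorphisms A) \<le> card (hom A A \<inter> extensional (carrier A))"
    using finite_extensional_homs[OF assms(2,2)]
    by (rule card_mono) (auto simp: nontrivial_automorphisms_def iso_def)
  then have "real (card (nontrivial_automorphisms A)) \<le> 2 powr ((log 2 (real n))\<^sup>2)"
    using card_extensional_endomorphisms_le[OF assms(2)] assms(3) unfolding order_def
    by (meson of_nat_le_iff order_trans)
  then have "real (card (nontrivially_symmetric_sets A))
      \<le> 2 powr ((log 2 (real n))\<^sup>2) * 2 powr (real m / 2 + 11 * real n / 24)"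
    using card_nontrivially_symmetric_sets_le[OF assms(2)] assms(3,5) unfolding order_def
    by (meson mult_right_mono order_trans powr_ge_zero)
  then show ?thesis
    by (simp add: nontrivially_symmetric_sets_def powr_add[symmetric] add.commute)
qed

end
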